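(* Let $\mathcal I$ index a finite set of non-exceptional zero-determinant strategies, strategy $i$ being associated with the point $(\bar\alpha_i,\bar\beta_i)$, and let $Z_i=-(\bar\alpha_i+\bar\beta_i)^{-1}$. Assume either Case (+): $\bar\alpha_i>0$ for all $i\in\mathcal I$, and for some $i^*\in\mathcal I$, $Z_{i^*}>Z_j$ for all $j\ne i^*$; or Case (−): $\bar\alpha_i<0$ for all $i\in\mathcal I$, and for some $i^*\in\mathcal I$, $Z_{i^*}<Z_j$ for all $j\ne i^*$. Then $i^*$ is an ESS for the game $\{A_{ij}\}$, and every solution $\pi(t)$ of the replicator dynamics with $\pi_{i^*}(0)>0$ converges to the vertex $v(i^* )$ as $t\to\infty$.
   Context: Iterated Prisoner's Dilemma with normalized payoffs $T=1>R>P>S=0$, $2R>1$; outcomes ordered $cc,cd,dc,dd$ (own play first); payoff vectors $\mathbf S_X=(R,0,1,P)$, $\mathbf S_Y=(R,1,0,P)$, $\mathbf 1=(1,1,1,1)$. A memory-one strategy vector $\mathbf p\in[0,1]^4$ gives the probability $p_k$ of playing $c$ after the $k$-th outcome, outcomes labeled from the player's own perspective. Strategy $i$ is a memory-one vector $\mathbf p^i$ with some initial play, which is a non-exceptional zero-determinant strategy associated with $(\bar\alpha_i,\bar\beta_i)$: $\mathbf p^i-(1,1,0,0)=\gamma_i(\bar\alpha_i\mathbf S_X+\bar\beta_i\mathbf S_Y+\mathbf 1)$ for some $\gamma_i>0$. $A_{ij}$ is the long-run (Cesàro-limit) average payoff of X when X uses strategy $i$ and Y uses strategy $j$. Replicator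 dynamics on the simplex $\Delta\subset\mathbb R^{\mathcal I}$: $\frac{d\pi_i}{dt}=\pi_i(A_{i\pi}-A_{\pi\pi})$, $A_{i\pi}=\sum_j\pi_jA_{ij}$, $A_{\pi\pi}=\sum_i\pi_iA_{i\pi}$; $v(i)$ is the vertex $\pi_i=1$. $i^*$ is an ESS if $A_{ji^*}<A_{i^*i^*}$ for all $j\ne i^*$. *)

theory Defs
  imports "HOL-Analysis.Analysis"
begin

text \<open>Outcomes are indexed 0,1,2,3 = cc, cd, dc, dd (own play first).
  Normalized payoffs T = 1, S = 0; R and P are parameters.\<close>

definition SX :: "real \<Rightarrow> real \<Rightarrow> nat \<Rightarrow> real" where
  "SX R P k = (if k = 0 then R else if k = 1 then 0 else if k = 2 then 1 else P)"

definition SY :: "real \<Rightarrow> real \<Rightarrow> nat \<Rightarrow> real" where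
  "SY R P k = (if k = 0 then R else if k = 1 then 1 else if k = 2 then 0 else P)"

definition e12 :: "nat \<Rightarrow> real" where
  "e12 k = (if k < 2 then 1 else 0)"

text \<open>Relabelling of an outcome from X's perspective to Y's perspective (cd <-> dc).\<close>
definition swap_outcome :: "nat \<Rightarrow> nat" where
  "swap_outcome k = (if k = 1 then 2 else if k = 2 then 1 else k)"

definition outcome_prob :: "real \<Rightarrow> real \<Rightarrow> nat \<Rightarrow> real" where
  "outcome_prob x y l =
     (if l = 0 then x * y else if l = 1 then x * (1 - y)
      else if l = 2 then (1 - x) * y else (1 - x) * (1 - y))"

text \<open>Distribution of the outcome (from X's perspective) in round n, when X uses memory-one
  vector p with initial cooperation probability x0 and Y uses q with initial cooperation
  probability y0.\<close>
fun outcome_dist :: "(nat \<Rightarrow> real) \<Rightarrow> (nat \<Rightarrow> real) \<Rightarrow> real \<Rightarrow> real \<Rightarrow> nat \<Rightarrow> nat \<Rightarrow> real" where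
  "outcome_dist p q x0 y0 0 l = outcome_prob x0 y0 l"
| "outcome_dist p q x0 y0 (Suc n) l =
     (\<Sum>k<4. outcome_dist p q x0 y0 n k * outcome_prob (p k) (q (swap_outcome k)) l)"

definition longrun_payoff ::
  "real \<Rightarrow> real \<Rightarrow> (nat \<Rightarrow> real) \<Rightarrow> (nat \<Rightarrow> real) \<Rightarrow> real \<Rightarrow> real \<Rightarrow> real" where
  "longrun_payoff R P p q x0 y0 =
     lim (\<lambda>N. (\<Sum>n<N. \<Sum>k<4. outcome_dist p q x0 y0 n k * SX R P k) / real N)"

definition game_matrix ::
  "real \<Rightarrow> real \<Rightarrow> ('i \<Rightarrow> nat \<Rightarrow> real) \<Rightarrow> ('i \<Rightarrow> real) \<Rightarrow> 'i \<Rightarrow> 'i \<Rightarrow> real" where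
  "game_matrix R P p x0 i j = longrun_payoff R P (p i) (p j) (x0 i) (x0 j)"

definition zd_strategy :: "real \<Rightarrow> real \<Rightarrow> (nat \<Rightarrow> real) \<Rightarrow> real \<Rightarrow> real \<Rightarrow> bool" where
  "zd_strategy R P p a b \<longleftrightarrow>
     (\<forall>k<4. 0 \<le> p k \<and> p k \<le> 1) \<and>
     (\<exists>g>0. \<forall>k<4. p k - e12 k = g * (a * SX R P k + b * SY R P k + 1))"

text \<open>Exceptional ZD strategy: p_2 = 1 and p_3 = 0 (1-based), i.e. a = b = -1.\<close>
definition non_exceptional :: "(nat \<Rightarrow> real) \<Rightarrow> bool" where
  "non_exceptional p \<longleftrightarrow> \<not> (p 1 = 1 \<and> p 2 = 0)"

definition is_ESS :: "('i \<Rightarrow> 'i \<Rightarrow> real) \<Rightarrow> 'i \<Rightarrow> bool" where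
  "is_ESS A istar \<longleftrightarrow> (\<forall>j. j \<noteq> istar \<longrightarrow> A j istar < A istar istar)"

definition strategy_simplex :: "(real ^ 'i::finite) set" where
  "strategy_simplex = {x. (\<forall>i. 0 \<le> x $ i) \<and> (\<Sum>i\<in>UNIV. x $ i) = 1}"

definition A_ipi :: "('i::finite \<Rightarrow> 'i \<Rightarrow> real) \<Rightarrow> real ^ 'i \<Rightarrow> 'i \<Rightarrow> real" where
  "A_ipi A x i = (\<Sum>j\<in>UNIV. x $ j * A i j)"

definition A_pipi :: "('i::finite \<Rightarrow> 'i \<Rightarrow> real) \<Rightarrow> real ^ 'i \<Rightarrow> real" where
  "A_pipi A x = (\<Sum>i\<in>UNIV. x $ i * A_ipi A x i)"

definition replicator_field :: "('i::finite \<Rightarrow> 'i \<Rightarrow> real) \<Rightarrow> real ^ 'i \<Rightarrow> real ^ 'i" where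
  "replicator_field A x = (\<chi> i. x $ i * (A_ipi A x i - A_pipi A x))"

definition vertex :: "'i::finite \<Rightarrow> real ^ 'i" where
  "vertex i = (\<chi> j. if j = i then 1 else 0)"

end

theory Submission
  imports Defs "HOL-Real_Asymp.Real_Asymp"
begin

text \<open>By the Press--Dyson argument, a ZD strategy \<open>i\<close> pins the long-run payoffs of any
  match to the line \<open>\<alpha>\<^sub>i S\<^sub>X + \<beta>\<^sub>i S\<^sub>Y + 1 = 0\<close>; two such lines meet in a
  single point, which gives \<open>A\<^sub>i\<^sub>j = (\<beta>\<^sub>i - \<alpha>\<^sub>j) / (\<alpha>\<^sub>i \<alpha>\<^sub>j - \<beta>\<^sub>i \<beta>\<^sub>j)\<close>
  explicitly. In either case of the hypothesis, \<open>A\<^sub>i\<^sub>k + 1 / (\<alpha>\<^sub>k + \<beta>\<^sub>k)\<close> is a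
  positive multiple of \<open>\<rho>\<^sub>i - \<rho>\<^sub>k\<close>, where \<open>\<rho>\<^sub>i = \<plusminus>(\<alpha>\<^sub>i + \<beta>\<^sub>i)\<close> ranks the strategies
  with \<open>i*\<close> on top. Hence \<open>i*\<close> earns strictly more than any \<open>j\<close> against every
  opponent ranked at least as high as \<open>j\<close>. This gives the ESS property and, along the
  replicator flow, the elimination of the strategies in increasing order of rank.\<close>

lemma sum_lessThan_4: "(\<Sum>k<(4::nat). f k) = f 0 + f 1 + f 2 + (f 3 :: real)"
  by (simp add: eval_nat_numeral)

lemma outcome_prob_nonneg:
  assumes "0 \<le> x" "x \<le> 1" "0 \<le> y" "y \<le> 1"
  shows "0 \<le> outcome_prob x y l"
  using assms by (simp add: outcome_prob_def)

lemma sum_outcome_prob: "(\<Sum>l<4. outcome_prob x y l) = 1"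
  by (simp add: sum_lessThan_4 outcome_prob_def algebra_simps)

lemma swap_outcome_less_4: "k < 4 \<Longrightarrow> swap_outcome k < 4"
  by (simp add: swap_outcome_def)

lemma outcome_dist_stochastic:
  assumes p: "\<forall>k<4. 0 \<le> p k \<and> p k \<le> 1" and q: "\<forall>k<4. 0 \<le> q k \<and> q k \<le> 1"
    and "0 \<le> x0" "x0 \<le> 1" "0 \<le> y0" "y0 \<le> 1"
  shows "(\<forall>l<4. 0 \<le> outcome_dist p q x0 y0 n l) \<and> (\<Sum>l<4. outcome_dist p q x0 y0 n l) = 1"
proof (induction n)
  case 0
  then show ?case using assms by (simp add: outcome_prob_nonneg sum_outcome_prob)
next
  case (Suc n)
  have "0 \<le> outcome_prob (p k) (q (swap_outcome k)) l" if "k < 4" for k l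
    using p q that swap_outcome_less_4[OF that] by (intro outcome_prob_nonneg) auto
  with Suc have "\<forall>l<4. 0 \<le> outcome_dist p q x0 y0 (Suc n) l"
    by (auto intro!: sum_nonneg)
  moreover have "(\<Sum>l<4. outcome_dist p q x0 y0 (Suc n) l)
      = (\<Sum>k<4. outcome_dist p q x0 y0 n k * (\<Sum>l<4. outcome_prob (p k) (q (swap_outcome k)) l))"
    by (simp add: sum_lessThan_4 algebra_simps)
  ultimately show ?case using Suc by (simp add: sum_outcome_prob)
qed

text \<open>\<open>e12 l = 1\<close> iff X cooperates in outcome \<open>l\<close>, and \<open>e12 (swap_outcome l) = 1\<close>
  iff Y does.\<close>

lemma own_cooperation_Suc:
  "(\<Sum>l<4. outcome_dist p q x0 y0 (Suc n) l * e12 l) = (\<Sum>k<4. outcome_dist p q x0 y0 n k * p k)"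
  by (simp add: sum_lessThan_4 outcome_prob_def e12_def algebra_simps)

lemma opponent_cooperation_Suc:
  "(\<Sum>l<4. outcome_dist p q x0 y0 (Suc n) l * e12 (swap_outcome l))
    = (\<Sum>k<4. outcome_dist p q x0 y0 n k * q (swap_outcome k))"
  by (simp add: sum_lessThan_4 outcome_prob_def e12_def swap_outcome_def algebra_simps)

lemma cesaro_mean_tendsto_0_if_increments:
  fixes c f :: "nat \<Rightarrow> real"
  assumes "\<And>n. \<bar>c n\<bar> \<le> B" and "g \<noteq> 0" and "\<And>n. c (Suc n) - c n = g * f n"
  shows "(\<lambda>N. (\<Sum>n<N. f n) / real N) \<longlonglongrightarrow> 0"
proof (rule Lim_null_comparison)
  show "\<forall>\<^sub>F N in sequentially. norm ((\<Sum>n<N. f n) / real N) \<le> 2 * B / \<bar>g\<bar> / real N"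
  proof (intro always_eventually allI)
    fix N
    have "g * (\<Sum>n<N. f n) = c N - c 0"
      by (simp add: sum_distrib_left flip: assms(3) sum_lessThan_telescope)
    moreover have "\<bar>c N - c 0\<bar> \<le> 2 * B" using assms(1)[of N] assms(1)[of 0] by linarith
    ultimately have sum_bound: "\<bar>\<Sum>n<N. f n\<bar> \<le> 2 * B / \<bar>g\<bar>"
      using assms(2) by (simp add: abs_mult field_simps)
    show "norm ((\<Sum>n<N. f n) / real N) \<le> 2 * B / \<bar>g\<bar> / real N"
      using divide_right_mono[OF sum_bound, of "real N"] by (simp add: abs_divide)
  qed
  show "(\<lambda>N. 2 * B / \<bar>g\<bar> / real N) \<longlonglongrightarrow> 0"
    by (rule lim_const_over_n)
qed

definition mean_payoff ::
  "(nat \<Rightarrow> real) \<Rightarrow> (nat \<Rightarrow> real) \<Rightarrow> real \<Rightarrow> real \<Rightarrow> (nat \<Rightarrow> real) \<Rightarrow> nat \<Rightarrow> real" where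
  "mean_payoff p q x0 y0 s N = (\<Sum>n<N. \<Sum>k<4. outcome_dist p q x0 y0 n k * s k) / real N"

lemma longrun_payoff_eq_lim_mean_payoff:
  "longrun_payoff R P p q x0 y0 = lim (mean_payoff p q x0 y0 (SX R P))"
  unfolding longrun_payoff_def mean_payoff_def ..

lemma mean_payoff_affine:
  assumes "\<And>n. (\<Sum>l<4. outcome_dist p q x0 y0 n l) = 1" and "0 < N"
  shows "(\<Sum>n<N. \<Sum>k<4. outcome_dist p q x0 y0 n k * (a * s k + b * t k + 1)) / real N
    = a * mean_payoff p q x0 y0 s N + b * mean_payoff p q x0 y0 t N + 1"
proof -
  have "(\<Sum>n<N. \<Sum>k<4. outcome_dist p q x0 y0 n k * (a * s k + b * t k + 1))
      = a * (\<Sum>n<N. \<Sum>k<4. outcome_dist p q x0 y0 n k * s k)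
        + b * (\<Sum>n<N. \<Sum>k<4. outcome_dist p q x0 y0 n k * t k) + real N"
    using assms(1) by (simp add: sum_lessThan_4 sum.distrib sum_distrib_left algebra_simps)
  then show ?thesis
    using assms(2) by (simp add: mean_payoff_def field_simps)
qed

lemma SX_swap_outcome: "SX R P (swap_outcome k) = SY R P k"
  by (simp add: SX_def SY_def swap_outcome_def)

lemma SY_swap_outcome: "SY R P (swap_outcome k) = SX R P k"
  by (simp add: SX_def SY_def swap_outcome_def)

lemma zd_strategyD:
  assumes "zd_strategy R P p a b"
  obtains g where "0 < g" and "\<forall>k<4. 0 \<le> p k \<and> p k \<le> 1"
    and "\<And>k. k < 4 \<Longrightarrow> p k = e12 k + g * (a * SX R P k + b * SY R P k + 1)"
  using assms unfolding zd_strategy_def by (metis add.commute diff_eq_eq)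

text \<open>The Press--Dyson argument: the probability that X cooperates is bounded, and by the ZD
  equation its increments are proportional to the expected value of
  \<open>a SX + b SY + 1\<close>; hence the Ces\<agrave>ro mean of the latter vanishes.\<close>

lemma zd_mean_payoff_relation:
  assumes "zd_strategy R P p a b" and q: "\<forall>k<4. 0 \<le> q k \<and> q k \<le> 1"
    and x0: "0 \<le> x0" "x0 \<le> 1" and y0: "0 \<le> y0" "y0 \<le> 1"
  shows "(\<lambda>N. a * mean_payoff p q x0 y0 (SX R P) N + b * mean_payoff p q x0 y0 (SY R P) N + 1)
    \<longlonglongrightarrow> 0"
proof -
  obtain g where g: "0 < g" and p: "\<forall>k<4. 0 \<le> p k \<and> p k \<le> 1"
    and zd: "\<And>k. k < 4 \<Longrightarrow> p k = e12 k + g * (a * SX R P k + b * SY R P k + 1)"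
    by (rule zd_strategyD[OF assms(1)]) blast
  define d where "d = outcome_dist p q x0 y0"
  define c where "c n = (\<Sum>k<4. d n k * e12 k)" for n
  define f where "f n = (\<Sum>k<4. d n k * (a * SX R P k + b * SY R P k + 1))" for n
  have stochastic: "(\<forall>l<4. 0 \<le> d n l) \<and> (\<Sum>l<4. d n l) = 1" for n
    unfolding d_def using outcome_dist_stochastic[OF p q x0 y0] by blast
  have "\<bar>c n\<bar> \<le> 1" for n
  proof -
    have "0 \<le> c n" "c n \<le> (\<Sum>k<4. d n k)"
      using conjunct1[OF stochastic[of n]] unfolding c_def
      by (auto intro!: sum_nonneg sum_mono simp: e12_def)
    then show ?thesis using stochastic[of n] by simp
  qed
  moreover have "c (Suc n) - c n = g * f n" for n
  proof -
    have "c (Suc n) = (\<Sum>k<4. d n k * p k)"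
      unfolding c_def d_def by (rule own_cooperation_Suc)
    also have "\<dots> = (\<Sum>k<4. d n k * e12 k + g * (d n k * (a * SX R P k + b * SY R P k + 1)))"
      by (intro sum.cong) (simp_all add: zd algebra_simps)
    finally show ?thesis
      by (simp add: c_def f_def sum.distrib sum_distrib_left)
  qed
  ultimately have "(\<lambda>N. (\<Sum>n<N. f n) / real N) \<longlonglongrightarrow> 0"
    using g by (intro cesaro_mean_tendsto_0_if_increments[of c 1 g f]) auto
  moreover have "\<forall>\<^sub>F N in sequentially. (\<Sum>n<N. f n) / real N
      = a * mean_payoff p q x0 y0 (SX R P) N + b * mean_payoff p q x0 y0 (SY R P) N + 1"
    using eventually_gt_at_top[of 0]
    by eventually_elim (use stochastic in \<open>simp add: f_def d_def mean_payoff_affine\<close>)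
  ultimately show ?thesis
    by (rule Lim_transform_eventually)
qed

lemma zd_mean_payoff_relation_opponent:
  assumes "zd_strategy R P q a b" and p: "\<forall>k<4. 0 \<le> p k \<and> p k \<le> 1"
    and x0: "0 \<le> x0" "x0 \<le> 1" and y0: "0 \<le> y0" "y0 \<le> 1"
  shows "(\<lambda>N. b * mean_payoff p q x0 y0 (SX R P) N + a * mean_payoff p q x0 y0 (SY R P) N + 1)
    \<longlonglongrightarrow> 0"
proof -
  obtain g where g: "0 < g" and q: "\<forall>k<4. 0 \<le> q k \<and> q k \<le> 1"
    and zd: "\<And>k. k < 4 \<Longrightarrow> q k = e12 k + g * (a * SX R P k + b * SY R P k + 1)"
    by (rule zd_strategyD[OF assms(1)]) blast
  define d where "d = outcome_dist p q x0 y0"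
  define c where "c n = (\<Sum>k<4. d n k * e12 (swap_outcome k))" for n
  define f where "f n = (\<Sum>k<4. d n k * (a * SY R P k + b * SX R P k + 1))" for n
  have stochastic: "(\<forall>l<4. 0 \<le> d n l) \<and> (\<Sum>l<4. d n l) = 1" for n
    unfolding d_def using outcome_dist_stochastic[OF p q x0 y0] by blast
  have "\<bar>c n\<bar> \<le> 1" for n
  proof -
    have "0 \<le> c n" "c n \<le> (\<Sum>k<4. d n k)"
      using conjunct1[OF stochastic[of n]] unfolding c_def
      by (auto intro!: sum_nonneg sum_mono simp: e12_def)
    then show ?thesis using stochastic[of n] by simp
  qed
  moreover have "c (Suc n) - c n = g * f n" for n
  proof -
    have "c (Suc n) = (\<Sum>k<4. d n k * q (swap_outcome k))"
      unfolding c_def d_def by (rule opponent_cooperation_Suc)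
    also have "\<dots> = (\<Sum>k<4. d n k * e12 (swap_outcome k)
        + g * (d n k * (a * SY R P k + b * SX R P k + 1)))"
      by (intro sum.cong)
        (simp_all add: zd swap_outcome_less_4 SX_swap_outcome SY_swap_outcome algebra_simps)
    finally show ?thesis
      by (simp add: c_def f_def sum.distrib sum_distrib_left)
  qed
  ultimately have "(\<lambda>N. (\<Sum>n<N. f n) / real N) \<longlonglongrightarrow> 0"
    using g by (intro cesaro_mean_tendsto_0_if_increments[of c 1 g f]) auto
  moreover have "\<forall>\<^sub>F N in sequentially. (\<Sum>n<N. f n) / real N
      = b * mean_payoff p q x0 y0 (SX R P) N + a * mean_payoff p q x0 y0 (SY R P) N + 1"
    using eventually_gt_at_top[of 0]
    by eventually_elim (use stochastic in \<open>simp add: f_def d_def mean_payoff_affine\<close>)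
  ultimately show ?thesis
    by (rule Lim_transform_eventually)
qed

lemma longrun_payoff_zd:
  assumes "zd_strategy R P p a b" and "zd_strategy R P q a' b'"
    and "0 \<le> x0" "x0 \<le> 1" "0 \<le> y0" "y0 \<le> 1"
    and det: "a * a' - b * b' \<noteq> 0"
  shows "longrun_payoff R P p q x0 y0 = (b - a') / (a * a' - b * b')"
proof -
  define X where "X = mean_payoff p q x0 y0 (SX R P)"
  define Y where "Y = mean_payoff p q x0 y0 (SY R P)"
  define u where "u N = a * X N + b * Y N + 1" for N
  define v where "v N = b' * X N + a' * Y N + 1" for N
  have "\<forall>k<4. 0 \<le> p k \<and> p k \<le> 1" "\<forall>k<4. 0 \<le> q k \<and> q k \<le> 1"
    using assms(1,2) by (auto simp: zd_strategy_def)
  then have "u \<longlonglongrightarrow> 0" "v \<longlonglongrightarrow> 0"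
    unfolding u_def v_def X_def Y_def
    using assms by (auto intro: zd_mean_payoff_relation zd_mean_payoff_relation_opponent)
  then have "(\<lambda>N. ((u N - 1) * a' - b * (v N - 1)) / (a * a' - b * b'))
      \<longlonglongrightarrow> ((0 - 1) * a' - b * (0 - 1)) / (a * a' - b * b')"
    by (intro tendsto_intros) (use det in auto)
  moreover have "((u N - 1) * a' - b * (v N - 1)) / (a * a' - b * b') = X N" for N
    using det by (simp add: u_def v_def field_simps)
  ultimately have "X \<longlonglongrightarrow> (b - a') / (a * a' - b * b')"
    by (simp add: algebra_simps)
  then show ?thesis
    by (simp add: longrun_payoff_eq_lim_mean_payoff X_def limI)
qed

lemma zd_parameter_bounds:
  assumes "zd_strategy R P p a b"
  shows "b \<le> -1" and "-1 \<le> a" and "(a + b) * R + 1 \<le> 0"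
proof -
  obtain g where g: "0 < g" and p: "\<forall>k<4. 0 \<le> p k \<and> p k \<le> 1"
    and zd: "\<And>k. k < 4 \<Longrightarrow> p k = e12 k + g * (a * SX R P k + b * SY R P k + 1)"
    by (rule zd_strategyD[OF assms]) blast
  have "g * ((a + b) * R + 1) \<le> 0" "g * (b + 1) \<le> 0" "0 \<le> g * (a + 1)"
    using p[rule_format, of 0] p[rule_format, of 1] p[rule_format, of 2] zd[of 0] zd[of 1] zd[of 2]
    by (simp_all add: e12_def SX_def SY_def algebra_simps)
  with g show "b \<le> -1" "-1 \<le> a" "(a + b) * R + 1 \<le> 0"
    by (simp_all add: mult_le_0_iff zero_le_mult_iff)
qed

lemma non_exceptional_zd_parameters:
  assumes "zd_strategy R P p a b" and "non_exceptional p"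
  shows "\<not> (a = -1 \<and> b = -1)"
proof
  assume "a = -1 \<and> b = -1"
  moreover obtain g where "\<And>k. k < 4 \<Longrightarrow> p k = e12 k + g * (a * SX R P k + b * SY R P k + 1)"
    by (rule zd_strategyD[OF assms(1)]) blast
  ultimately have "p 1 = 1" "p 2 = 0"
    by (auto simp: e12_def SX_def SY_def)
  with assms(2) show False
    by (simp add: non_exceptional_def)
qed

lemma zd_parameter_sum_neg:
  assumes "zd_strategy R P p a b" and "0 < R"
  shows "a + b < 0"
  using zd_parameter_bounds(3)[OF assms(1)] assms(2)
  by (smt (verit) mult_nonneg_nonneg)

lemma zd_determinant_neg:
  assumes zp: "zd_strategy R P p a b" and zq: "zd_strategy R P q a' b'"
    and "non_exceptional p" and "0 < R" and "\<sigma> \<in> {1, -1}" and "0 < \<sigma> * a" and "0 < \<sigma> * a'"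
  shows "a * a' - b * b' < 0"
proof -
  consider "\<sigma> = 1" | "\<sigma> = -1"
    using assms(5) by blast
  then show ?thesis
  proof cases
    case 1
    with assms(6,7) have "0 < a" "0 < a'" by simp_all
    moreover have "a < - b" "a' < - b'"
      using zd_parameter_sum_neg[OF zp assms(4)] zd_parameter_sum_neg[OF zq assms(4)] by simp_all
    ultimately have "a * a' < (- b) * (- b')"
      by (intro mult_strict_mono) auto
    then show ?thesis by simp
  next
    case 2
    with assms(6,7) have "a < 0" "a' < 0" by simp_all
    moreover note zd_parameter_bounds(1,2)[OF zp] zd_parameter_bounds(1,2)[OF zq]
      non_exceptional_zd_parameters[OF zp assms(3)]
    ultimately have a: "-1 \<le> a" "a < 0" "0 < - a'" "- a' \<le> 1" and b: "1 \<le> - b" "1 \<le> - b'"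
      and "-1 < a \<or> b < -1"
      by linarith+
    have "1 * 1 \<le> (- b) * (- b')"
      using b by (intro mult_mono) auto
    moreover have "(- a) * (- a') \<le> 1 * 1"
      using a by (intro mult_mono) auto
    moreover have "(- a) * (- a') < 1 * 1 \<or> 1 * 1 < (- b) * (- b')"
      using \<open>-1 < a \<or> b < -1\<close>
    proof
      assume "-1 < a"
      then have "(- a) * (- a') < 1 * (- a')"
        using a by (intro mult_strict_right_mono) auto
      then show ?thesis using a by simp
    next
      assume "b < -1"
      then have "1 * (- b') < (- b) * (- b')"
        using b by (intro mult_strict_right_mono) auto
      then show ?thesis using b by simp
    qed
    ultimately show ?thesis by linarith
  qed
qed

lemma zd_payoff_offset_sign:
  assumes zp: "zd_strategy R P p a b" and zq: "zd_strategy R P q a' b'"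
    and "non_exceptional p" and "0 < R" and "\<sigma> \<in> {1, -1}" and "0 < \<sigma> * a" and "0 < \<sigma> * a'"
  shows "\<exists>c>0. (b - a') / (a * a' - b * b') + 1 / (a' + b') = c * (\<sigma> * (a + b) - \<sigma> * (a' + b'))"
proof -
  have D: "a * a' - b * b' < 0"
    using zd_determinant_neg[OF assms] .
  have s': "a' + b' < 0"
    using zd_parameter_sum_neg[OF zq assms(4)] .
  define c where "c = \<sigma> * a' / ((a * a' - b * b') * (a' + b'))"
  have "0 < c"
    using D s' assms(7) by (simp add: c_def zero_less_mult_iff)
  moreover have "(b - a') / (a * a' - b * b') + 1 / (a' + b') = c * (\<sigma> * (a + b) - \<sigma> * (a' + b'))"
  proof -
    have "(b - a') / (a * a' - b * b') + 1 / (a' + b')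
        = a' * ((a + b) - (a' + b')) / ((a * a' - b * b') * (a' + b'))"
      using D s' by (simp add: field_simps)
    also have "\<dots> = (\<sigma> * \<sigma>) * a' * ((a + b) - (a' + b')) / ((a * a' - b * b') * (a' + b'))"
      using assms(5) by auto
    also have "\<dots> = c * (\<sigma> * (a + b) - \<sigma> * (a' + b'))"
      by (simp add: c_def right_diff_distrib mult_ac)
    finally show ?thesis .
  qed
  ultimately show ?thesis by blast
qed

lemma game_matrix_offset_sign:
  assumes zd: "\<forall>i. zd_strategy R P (p i) (a i) (b i)" and ne: "\<forall>i. non_exceptional (p i)"
    and "\<forall>i. 0 \<le> x0 i \<and> x0 i \<le> 1" and "0 < R" and "\<sigma> \<in> {1, -1}" and "\<And>i. 0 < \<sigma> * a i"
  shows "\<exists>c>0. game_matrix R P p x0 i k + 1 / (a k + b k)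
    = c * (\<sigma> * (a i + b i) - \<sigma> * (a k + b k))"
proof -
  note zd_i = zd[rule_format, of i] and zd_k = zd[rule_format, of k]
  have "a i * a k - b i * b k < 0"
    using zd_determinant_neg[OF zd_i zd_k ne[rule_format] assms(4,5,6,6)] .
  then have "game_matrix R P p x0 i k = (b i - a k) / (a i * a k - b i * b k)"
    unfolding game_matrix_def using zd_i zd_k assms(3) by (intro longrun_payoff_zd) auto
  then show ?thesis
    using zd_payoff_offset_sign[OF zd_i zd_k ne[rule_format] assms(4,5,6,6)] by simp
qed

lemma common_sign_ranking:
  fixes a s :: "'i \<Rightarrow> real"
  assumes neg: "\<And>i. s i < 0"
    and "((\<forall>i. a i > 0) \<and> (\<forall>j. j \<noteq> istar \<longrightarrow> - 1 / s istar > - 1 / s j))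
       \<or> ((\<forall>i. a i < 0) \<and> (\<forall>j. j \<noteq> istar \<longrightarrow> - 1 / s istar < - 1 / s j))"
  obtains \<sigma> where "\<sigma> \<in> {1, -1}" and "\<And>i. 0 < \<sigma> * a i"
    and "\<And>j. j \<noteq> istar \<Longrightarrow> \<sigma> * s j < \<sigma> * s istar"
proof -
  have inverse_less: "1 / s j < 1 / s k \<longleftrightarrow> s k < s j" for j k
    using neg[of j] neg[of k] by (auto simp: divide_simps)
  from assms(2) show thesis
  proof
    assume "(\<forall>i. a i > 0) \<and> (\<forall>j. j \<noteq> istar \<longrightarrow> - 1 / s istar > - 1 / s j)"
    then show thesis
      by (intro that[of 1]) (auto simp: inverse_less)
  next
    assume "(\<forall>i. a i < 0) \<and> (\<forall>j. j \<noteq> istar \<longrightarrow> - 1 / s istar < - 1 / s j)"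
    then show thesis
      by (intro that[of "-1"]) (auto simp: inverse_less)
  qed
qed

lemma dominated_by_top_of_ranking:
  fixes A :: "'i \<Rightarrow> 'i \<Rightarrow> real" and \<rho> off :: "'i \<Rightarrow> real"
  assumes offset: "\<And>i k. \<exists>c>0. A i k + off k = c * (\<rho> i - \<rho> k)"
    and top: "\<And>j. j \<noteq> istar \<Longrightarrow> \<rho> j < \<rho> istar"
    and "j \<noteq> istar" and "\<rho> j \<le> \<rho> k"
  shows "A j k < A istar k"
proof -
  obtain c1 where c1: "0 < c1" "A istar k + off k = c1 * (\<rho> istar - \<rho> k)"
    using offset by blast
  obtain c2 where c2: "0 < c2" "A j k + off k = c2 * (\<rho> j - \<rho> k)"
    using offset by blast
  have "c2 * (\<rho> j - \<rho> k) \<le> 0"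
    using c2(1) assms(4) by (simp add: mult_nonneg_nonpos)
  consider "k = istar" | "\<rho> k < \<rho> istar"
    using top by blast
  then show ?thesis
  proof cases
    case 1
    then have "c2 * (\<rho> j - \<rho> k) < 0"
      using c2(1) top assms(3) by (simp add: mult_pos_neg)
    then show ?thesis
      using 1 c1(2) c2(2) by simp
  next
    case 2
    then have "0 < c1 * (\<rho> istar - \<rho> k)"
      using c1(1) by simp
    then show ?thesis
      using \<open>c2 * (\<rho> j - \<rho> k) \<le> 0\<close> c1(2) c2(2) by linarith
  qed
qed

lemma linear_ode_eq_exp_integral:
  fixes h g :: "real \<Rightarrow> real"
  assumes g: "continuous_on {0..} g"
    and h: "\<And>t. 0 \<le> t \<Longrightarrow> (h has_real_derivative h t * g t) (at t within {0..})"
    and "0 \<le> t"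
  shows "h t = h 0 * exp (integral {0..t} g)"
proof -
  define G where "G u = integral {0..u} g" for u
  have const: "((\<lambda>u. h u * exp (- G u)) has_real_derivative 0) (at u within {0..t})"
    if "u \<in> {0..t}" for u
  proof -
    have "continuous_on {0..t} g"
      using g by (rule continuous_on_subset) auto
    then have "(G has_real_derivative g u) (at u within {0..t})"
      unfolding G_def using that by (rule integral_has_real_derivative)
    then have exp_deriv:
      "((\<lambda>u. exp (- G u)) has_real_derivative exp (- G u) * - g u) (at u within {0..t})"
      by (auto intro!: derivative_eq_intros)
    have h_deriv: "(h has_real_derivative h u * g u) (at u within {0..t})"
      using h[of u] that by (auto intro: DERIV_subset)
    show ?thesis
      by (rule DERIV_cong[OF DERIV_mult[OF h_deriv exp_deriv]]) (simp add: algebra_simps)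
  qed
  then obtain c where "\<forall>u\<in>{0..t}. h u * exp (- G u) = c"
    using has_field_derivative_zero_constant[OF convex_real_interval(5) const] by blast
  then have "h t * exp (- G t) = h 0 * exp (- G 0)"
    using assms(3) by auto
  then show ?thesis
    by (simp add: G_def exp_minus field_simps)
qed

lemma A_ipi_diff_le:
  fixes A :: "'i::finite \<Rightarrow> 'i \<Rightarrow> real"
  assumes "x \<in> strategy_simplex"
    and "\<And>k. k \<notin> L \<Longrightarrow> A j k - A i k \<le> - \<delta>" and "\<And>k. k \<in> L \<Longrightarrow> A j k - A i k \<le> M"
  shows "A_ipi A x j - A_ipi A x i \<le> - \<delta> + (\<delta> + M) * (\<Sum>k\<in>L. x $ k)"
proof -
  have x: "\<And>k. 0 \<le> x $ k" "(\<Sum>k\<in>UNIV. x $ k) = 1"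
    using assms(1) by (auto simp: strategy_simplex_def)
  have "A_ipi A x j - A_ipi A x i = (\<Sum>k\<in>UNIV. x $ k * (A j k - A i k))"
    by (simp add: A_ipi_def sum_subtractf algebra_simps)
  also have "\<dots> \<le> (\<Sum>k\<in>UNIV. x $ k * (- \<delta> + (if k \<in> L then \<delta> + M else 0)))"
    using assms(2,3) x(1) by (intro sum_mono mult_left_mono) auto
  also have "\<dots> = (\<Sum>k\<in>UNIV. - \<delta> * x $ k) + (\<Sum>k\<in>UNIV. if k \<in> L then (\<delta> + M) * x $ k else 0)"
    unfolding sum.distrib [symmetric] by (rule sum.cong) (simp_all add: algebra_simps)
  also have "\<dots> = - \<delta> * (\<Sum>k\<in>UNIV. x $ k) + (\<delta> + M) * (\<Sum>k\<in>L. x $ k)"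
    by (simp add: sum_distrib_left flip: sum.inter_restrict)
  finally show ?thesis
    using x(2) by simp
qed

locale replicator_solution =
  fixes A :: "'i::finite \<Rightarrow> 'i \<Rightarrow> real" and \<pi> :: "real \<Rightarrow> real ^ 'i"
  assumes initial_in_simplex: "\<pi> 0 \<in> strategy_simplex"
    and solves_replicator:
      "\<And>t. 0 \<le> t \<Longrightarrow> (\<pi> has_vector_derivative replicator_field A (\<pi> t)) (at t within {0..})"
begin

definition growth_rate :: "'i \<Rightarrow> real \<Rightarrow> real" where
  "growth_rate i t = A_ipi A (\<pi> t) i - A_pipi A (\<pi> t)"

lemma component_has_derivative:
  assumes "0 \<le> t"
  shows "((\<lambda>t. \<pi> t $ i) has_real_derivative \<pi> t $ i * growth_rate i t) (at t within {0..})"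
  using bounded_linear.has_vector_derivative[OF bounded_linear_vec_nth solves_replicator[OF assms]]
  by (simp add: has_real_derivative_iff_has_vector_derivative replicator_field_def growth_rate_def)

lemma component_continuous: "continuous_on {0..} (\<lambda>t. \<pi> t $ i)"
  by (rule DERIV_continuous_on[OF component_has_derivative]) auto

lemma component_eq_exp:
  assumes "0 \<le> t"
  shows "\<pi> t $ i = \<pi> 0 $ i * exp (integral {0..t} (growth_rate i))"
proof (rule linear_ode_eq_exp_integral[OF _ component_has_derivative assms])
  show "continuous_on {0..} (growth_rate i)"
    unfolding growth_rate_def A_ipi_def A_pipi_def by (intro continuous_intros component_continuous)
qed

lemma component_nonneg: "0 \<le> t \<Longrightarrow> 0 \<le> \<pi> t $ i"
  using component_eq_exp[of t i] initial_in_simplex by (simp add: strategy_simplex_def)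

lemma component_pos: "0 \<le> t \<Longrightarrow> 0 < \<pi> 0 $ i \<Longrightarrow> 0 < \<pi> t $ i"
  using component_eq_exp[of t i] by simp

lemma component_eq_0: "0 \<le> t \<Longrightarrow> \<pi> 0 $ i = 0 \<Longrightarrow> \<pi> t $ i = 0"
  using component_eq_exp[of t i] by simp

text \<open>The excess mass \<open>\<Sum>i. \<pi>\<^sub>i - 1\<close> again solves a linear equation, with rate
  \<open>- A_pipi\<close>, and vanishes initially.\<close>

lemma sum_components:
  assumes "0 \<le> t"
  shows "(\<Sum>i\<in>UNIV. \<pi> t $ i) = 1"
proof -
  define h where "h t = (\<Sum>i\<in>UNIV. \<pi> t $ i) - 1" for t
  have "(h has_real_derivative h u * - A_pipi A (\<pi> u)) (at u within {0..})" if "0 \<le> u" for u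
  proof -
    have "(h has_real_derivative (\<Sum>i\<in>UNIV. \<pi> u $ i * growth_rate i u) - 0) (at u within {0..})"
      unfolding h_def by (intro DERIV_diff DERIV_sum component_has_derivative that DERIV_const)
    moreover have "(\<Sum>i\<in>UNIV. \<pi> u $ i * growth_rate i u) = h u * - A_pipi A (\<pi> u)"
      by (simp add: h_def growth_rate_def A_pipi_def right_diff_distrib sum_subtractf
          sum_distrib_right algebra_simps)
    ultimately show ?thesis by simp
  qed
  moreover have "continuous_on {0..} (\<lambda>t. - A_pipi A (\<pi> t))"
    unfolding A_ipi_def A_pipi_def by (intro continuous_intros component_continuous)
  ultimately have "h t = h 0 * exp (integral {0..t} (\<lambda>t. - A_pipi A (\<pi> t)))"
    using linear_ode_eq_exp_integral assms by blast
  moreover have "h 0 = 0"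
    using initial_in_simplex by (simp add: h_def strategy_simplex_def)
  ultimately show ?thesis
    by (simp add: h_def)
qed

lemma in_simplex: "0 \<le> t \<Longrightarrow> \<pi> t \<in> strategy_simplex"
  using component_nonneg sum_components by (simp add: strategy_simplex_def)

lemma component_le_1:
  assumes "0 \<le> t"
  shows "\<pi> t $ i \<le> 1"
proof -
  have "\<pi> t $ i \<le> (\<Sum>i\<in>UNIV. \<pi> t $ i)"
    using assms component_nonneg by (intro member_le_sum) auto
  with sum_components[OF assms] show ?thesis by simp
qed

lemma log_ratio_has_derivative:
  assumes "0 < t" and "0 < \<pi> 0 $ i" and "0 < \<pi> 0 $ j"
  shows "((\<lambda>t. ln (\<pi> t $ j) - ln (\<pi> t $ i)) has_real_derivative
    A_ipi A (\<pi> t) j - A_ipi A (\<pi> t) i) (at t)"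
proof -
  have at: "at t within {0..} = at t"
    using assms(1) by (intro at_within_interior) simp
  have "((\<lambda>t. \<pi> t $ k) has_real_derivative \<pi> t $ k * growth_rate k t) (at t)" for k
    using component_has_derivative[of t k] assms(1) at by simp
  moreover have "0 < \<pi> t $ i" "0 < \<pi> t $ j"
    using assms by (simp_all add: component_pos)
  ultimately have "((\<lambda>t. ln (\<pi> t $ j) - ln (\<pi> t $ i)) has_real_derivative
      \<pi> t $ j * growth_rate j t / \<pi> t $ j - \<pi> t $ i * growth_rate i t / \<pi> t $ i) (at t)"
    by (auto intro!: derivative_eq_intros)
  with \<open>0 < \<pi> t $ i\<close> \<open>0 < \<pi> t $ j\<close> show ?thesis
    by (simp add: growth_rate_def)
qed

text \<open>If \<open>j\<close> earns at least \<open>\<delta>\<close> less than \<open>i\<close> from some time on, then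
  \<open>ln (\<pi>\<^sub>j / \<pi>\<^sub>i)\<close> decreases at rate \<open>\<delta>\<close>, and \<open>\<pi>\<^sub>j \<le> \<pi>\<^sub>j / \<pi>\<^sub>i\<close>.\<close>

lemma component_tendsto_0_if_outperformed:
  assumes "0 < \<pi> 0 $ i" and "0 < \<delta>"
    and "\<forall>\<^sub>F t in at_top. A_ipi A (\<pi> t) j - A_ipi A (\<pi> t) i \<le> - \<delta>"
  shows "((\<lambda>t. \<pi> t $ j) \<longlongrightarrow> 0) at_top"
proof (cases "\<pi> 0 $ j = 0")
  case True
  have "\<forall>\<^sub>F t in at_top. \<pi> t $ j = 0"
    using eventually_ge_at_top[of 0] by eventually_elim (simp add: component_eq_0 True)
  then show ?thesis
    by (rule tendsto_eventually)
next
  case False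
  then have j: "0 < \<pi> 0 $ j"
    using component_nonneg[of 0 j] by simp
  obtain T where T: "\<And>t. T \<le> t \<Longrightarrow> A_ipi A (\<pi> t) j - A_ipi A (\<pi> t) i \<le> - \<delta>"
    using assms(3) by (auto simp: eventually_at_top_linorder)
  define T1 where "T1 = max T 1"
  define \<Phi> where "\<Phi> t = ln (\<pi> t $ j) - ln (\<pi> t $ i) + \<delta> * t" for t
  have \<Phi>_decreasing: "\<Phi> t \<le> \<Phi> T1" if "T1 \<le> t" for t
  proof (rule DERIV_nonpos_imp_nonincreasing[OF that])
    fix u assume u: "T1 \<le> u" "u \<le> t"
    then have "(\<Phi> has_real_derivative (A_ipi A (\<pi> u) j - A_ipi A (\<pi> u) i) + \<delta>) (at u)"
      unfolding \<Phi>_def using assms(1) j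
      by (intro DERIV_add log_ratio_has_derivative DERIV_cmult_Id) (auto simp: T1_def)
    moreover have "A_ipi A (\<pi> u) j - A_ipi A (\<pi> u) i + \<delta> \<le> 0"
      using T[of u] u by (simp add: T1_def)
    ultimately show "\<exists>y. (\<Phi> has_real_derivative y) (at u) \<and> y \<le> 0"
      by blast
  qed
  have bound: "\<pi> t $ j \<le> exp (\<Phi> T1 - \<delta> * t)" if "T1 \<le> t" for t
  proof -
    have t: "0 \<le> t" using that by (simp add: T1_def)
    have "\<pi> t $ j = exp (ln (\<pi> t $ j) - ln (\<pi> t $ i)) * \<pi> t $ i"
      using component_pos[OF t assms(1)] component_pos[OF t j] by (simp add: exp_diff)
    also have "\<dots> \<le> exp (ln (\<pi> t $ j) - ln (\<pi> t $ i))"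
      using component_le_1[OF t] by (simp add: mult_left_le)
    also have "\<dots> \<le> exp (\<Phi> T1 - \<delta> * t)"
      using \<Phi>_decreasing[OF that] by (simp add: \<Phi>_def)
    finally show ?thesis .
  qed
  show ?thesis
  proof (rule tendsto_sandwich[OF _ _ tendsto_const])
    show "\<forall>\<^sub>F t in at_top. 0 \<le> \<pi> t $ j"
      using eventually_ge_at_top[of 0] by eventually_elim (rule component_nonneg)
    show "\<forall>\<^sub>F t in at_top. \<pi> t $ j \<le> exp (\<Phi> T1 - \<delta> * t)"
      using eventually_ge_at_top[of T1] by eventually_elim (rule bound)
    show "((\<lambda>t. exp (\<Phi> T1 - \<delta> * t)) \<longlongrightarrow> 0) at_top"
      using assms(2) by real_asymp
  qed
qed

lemma eventually_outperformed:
  assumes "\<And>k. k \<notin> L \<Longrightarrow> A j k < A i k" and "\<And>k. k \<in> L \<Longrightarrow> ((\<lambda>t. \<pi> t $ k) \<longlongrightarrow> 0) at_top"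
  shows "\<exists>\<delta>>0. \<forall>\<^sub>F t in at_top. A_ipi A (\<pi> t) j - A_ipi A (\<pi> t) i \<le> - \<delta>"
proof -
  define \<delta> where "\<delta> = Min (insert 1 ((\<lambda>k. A i k - A j k) ` (- L)))"
  define M where "M = (\<Sum>k\<in>UNIV. \<bar>A j k - A i k\<bar>)"
  have "0 < \<delta>"
    using assms(1) by (auto simp: \<delta>_def)
  have gap: "A_ipi A (\<pi> t) j - A_ipi A (\<pi> t) i \<le> - \<delta> + (\<delta> + M) * (\<Sum>k\<in>L. \<pi> t $ k)"
    if "0 \<le> t" for t
  proof (rule A_ipi_diff_le[OF in_simplex[OF that]])
    show "A j k - A i k \<le> - \<delta>" if "k \<notin> L" for k
    proof -
      have "\<delta> \<le> A i k - A j k"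
        unfolding \<delta>_def using that by (intro Min_le) auto
      then show ?thesis by simp
    qed
    show "A j k - A i k \<le> M" for k
      using member_le_sum[of k UNIV "\<lambda>k. \<bar>A j k - A i k\<bar>"] by (simp add: M_def)
  qed
  have "((\<lambda>t. - \<delta> + (\<delta> + M) * (\<Sum>k\<in>L. \<pi> t $ k)) \<longlongrightarrow> - \<delta> + (\<delta> + M) * (\<Sum>k\<in>L. 0)) at_top"
    by (intro tendsto_intros assms(2))
  then have "\<forall>\<^sub>F t in at_top. - \<delta> + (\<delta> + M) * (\<Sum>k\<in>L. \<pi> t $ k) < - \<delta> / 2"
    using \<open>0 < \<delta>\<close> by (intro order_tendstoD(2)) auto
  then have "\<forall>\<^sub>F t in at_top. A_ipi A (\<pi> t) j - A_ipi A (\<pi> t) i \<le> - (\<delta> / 2)"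
    using eventually_ge_at_top[of 0] by eventually_elim (use gap in fastforce)
  then show ?thesis
    using \<open>0 < \<delta>\<close> by (intro exI[of _ "\<delta> / 2"]) simp
qed

lemma tendsto_vertex:
  assumes "\<And>j. j \<noteq> i \<Longrightarrow> ((\<lambda>t. \<pi> t $ j) \<longlongrightarrow> 0) at_top"
  shows "(\<pi> \<longlongrightarrow> vertex i) at_top"
proof (rule vec_tendstoI)
  fix k
  show "((\<lambda>t. \<pi> t $ k) \<longlongrightarrow> vertex i $ k) at_top"
  proof (cases "k = i")
    case True
    have "((\<lambda>t. 1 - (\<Sum>j\<in>- {i}. \<pi> t $ j)) \<longlongrightarrow> 1 - (\<Sum>j\<in>- {i}. 0)) at_top"
      by (intro tendsto_intros assms) auto
    moreover have rest: "1 - (\<Sum>j\<in>- {i}. \<pi> t $ j) = \<pi> t $ i" if "0 \<le> t" for t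
      using sum_components[OF that] sum.remove[of UNIV i "\<lambda>j. \<pi> t $ j"]
      by (simp add: Compl_eq_Diff_UNIV)
    have "\<forall>\<^sub>F t in at_top. 1 - (\<Sum>j\<in>- {i}. \<pi> t $ j) = \<pi> t $ i"
      using eventually_ge_at_top[of 0] by eventually_elim (rule rest)
    ultimately show ?thesis
      using True by (simp add: vertex_def tendsto_cong)
  qed (use assms in \<open>simp add: vertex_def\<close>)
qed

text \<open>Strategies are eliminated in increasing order of \<open>\<rho>\<close>: once all strategies ranked
  below \<open>j\<close> have vanished, \<open>istar\<close> outperforms \<open>j\<close> against every remaining strategy.\<close>

lemma tendsto_vertex_if_dominant:
  fixes \<rho> :: "'i \<Rightarrow> real"
  assumes "0 < \<pi> 0 $ istar"
    and top: "\<And>j. j \<noteq> istar \<Longrightarrow> \<rho> j < \<rho> istar"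
    and dominant: "\<And>j k. j \<noteq> istar \<Longrightarrow> \<rho> j \<le> \<rho> k \<Longrightarrow> A j k < A istar k"
  shows "(\<pi> \<longlongrightarrow> vertex istar) at_top"
proof (rule tendsto_vertex)
  fix j
  show "j \<noteq> istar \<Longrightarrow> ((\<lambda>t. \<pi> t $ j) \<longlongrightarrow> 0) at_top"
  proof (induction j rule: measure_induct_rule[of "\<lambda>j. card {k. \<rho> k < \<rho> j}"])
    case (less j)
    define L where "L = {k. \<rho> k < \<rho> j}"
    have "((\<lambda>t. \<pi> t $ k) \<longlongrightarrow> 0) at_top" if "k \<in> L" for k
    proof (rule less.IH)
      have "{k'. \<rho> k' < \<rho> k} \<subset> L"
        using that by (auto simp: L_def)
      then show "card {k'. \<rho> k' < \<rho> k} < card {k. \<rho> k < \<rho> j}"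
        unfolding L_def by (intro psubset_card_mono) auto
      show "k \<noteq> istar"
        using that top[OF less.prems] by (auto simp: L_def)
    qed
    moreover have "A j k < A istar k" if "k \<notin> L" for k
      using dominant[OF less.prems] that by (simp add: L_def)
    ultimately obtain \<delta> where "0 < \<delta>"
      and "\<forall>\<^sub>F t in at_top. A_ipi A (\<pi> t) j - A_ipi A (\<pi> t) istar \<le> - \<delta>"
      using eventually_outperformed by blast
    then show ?case
      using component_tendsto_0_if_outperformed assms(1) by blast
  qed
qed

end

theorem theorem4p11:
  fixes R P :: real
    and p :: "'i::finite \<Rightarrow> nat \<Rightarrow> real"
    and x0 :: "'i \<Rightarrow> real"
    and a b :: "'i \<Rightarrow> real"
    and istar :: 'i
  assumes "0 < P" and "P < R" and "R < 1" and "2 * R > 1"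
    and "\<forall>i. zd_strategy R P (p i) (a i) (b i)"
    and "\<forall>i. non_exceptional (p i)"
    and "\<forall>i. 0 \<le> x0 i \<and> x0 i \<le> 1"
    and "((\<forall>i. a i > 0) \<and>
          (\<forall>j. j \<noteq> istar \<longrightarrow> - 1 / (a istar + b istar) > - 1 / (a j + b j)))
       \<or> ((\<forall>i. a i < 0) \<and>
          (\<forall>j. j \<noteq> istar \<longrightarrow> - 1 / (a istar + b istar) < - 1 / (a j + b j)))"
  shows "is_ESS (game_matrix R P p x0) istar \<and>
    (\<forall>\<pi> :: real \<Rightarrow> real ^ 'i.
       \<pi> 0 \<in> strategy_simplex \<and> \<pi> 0 $ istar > 0 \<and>
       (\<forall>t\<ge>0. (\<pi> has_vector_derivative replicator_field (game_matrix R P p x0) (\<pi> t))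
                 (at t within {0..}))
       \<longrightarrow> (\<pi> \<longlongrightarrow> vertex istar) at_top)"
proof -
  define A where "A = game_matrix R P p x0"
  have "0 < R" using assms(1,2) by simp
  obtain \<sigma> where \<sigma>: "\<sigma> \<in> {1, -1}" "\<And>i. 0 < \<sigma> * a i"
    and top: "\<And>j. j \<noteq> istar \<Longrightarrow> \<sigma> * (a j + b j) < \<sigma> * (a istar + b istar)"
    using common_sign_ranking[of "\<lambda>i. a i + b i" a istar]
      zd_parameter_sum_neg[OF assms(5)[rule_format] \<open>0 < R\<close>]
      assms(8) by blast
  define \<rho> where "\<rho> i = \<sigma> * (a i + b i)" for i
  have "\<exists>c>0. A i k + 1 / (a k + b k) = c * (\<rho> i - \<rho> k)" for i k
    unfolding A_def \<rho>_def using assms(5-7) \<open>0 < R\<close> \<sigma> by (rule game_matrix_offset_sign)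
  then have dominant: "A j k < A istar k" if "j \<noteq> istar" "\<rho> j \<le> \<rho> k" for j k
    using dominated_by_top_of_ranking[of A "\<lambda>k. 1 / (a k + b k)" \<rho>] top that by (simp add: \<rho>_def)
  have "is_ESS A istar"
    using dominant top by (auto simp: is_ESS_def \<rho>_def less_imp_le)
  moreover have "(\<pi> \<longlongrightarrow> vertex istar) at_top"
    if "\<pi> 0 \<in> strategy_simplex" "0 < \<pi> 0 $ istar"
      "\<forall>t\<ge>0. (\<pi> has_vector_derivative replicator_field A (\<pi> t)) (at t within {0..})"
    for \<pi> :: "real \<Rightarrow> real ^ 'i"
  proof -
    interpret replicator_solution A \<pi>
      using that by unfold_locales auto
    show ?thesis
      using that(2) top dominant by (intro tendsto_vertex_if_dominant[of istar \<rho>]) (auto simp: \<rho>_def)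
  qed
  ultimately show ?thesis
    unfolding A_def by blast
qed

end
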